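(* Let $\mathcal{D}$ be a category with pullbacks and $(\mathcal{E},\mathcal{M})$ a stable orthogonal factorization system on $\mathcal{D}$, and let $\mathcal{A}$ be any category. Then the componentwise lifting of $(\mathcal{E},\mathcal{M})$ to $[\mathcal{A},\mathcal{D}]$ (natural transformations all of whose components are in $\mathcal{E}$, respectively in $\mathcal{M}$) restricts to an orthogonal factorization system on $\mathrm{CartNt}[\mathcal{A},\mathcal{D}]$, the category of all functors $\mathcal{A}\to\mathcal{D}$ and cartesian natural transformations.
   Context: An orthogonal factorization system $(\mathcal{E},\mathcal{M})$: both classes contain all isomorphisms and are closed under composition; each commuting square $g\circ e = m\circ f$ with $e\in\mathcal{E}$, $m\in\mathcal{M}$ has a unique diagonal $d$ with $d\circ e=f$, $m\circ d=g$; every morphism factors as $m\circ e$ with $e\in\mathcal{E}$, $m\in\mathcal{M}$. It is stable if $\mathcal{E}$ is closed under pullback along arbitrary morphisms. The componentwise lifting is an orthogonal factorization system on $[\mathcal{A},\mathcal{D}]$, with factorizations computed componentwise. A natural transformation is cartesian if all of its naturality squares are pullbacks. *)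

theory Defs
  imports Main
begin

record ('o, 'm) cat =
  Obj :: "'o set"
  Arr :: "'m set"
  Dom :: "'m \<Rightarrow> 'o"
  Cod :: "'m \<Rightarrow> 'o"
  Cmp :: "'m \<Rightarrow> 'm \<Rightarrow> 'm"   (* Cmp C g f = g \<circ> f *)
  Idn :: "'o \<Rightarrow> 'm"

definition category :: "('o, 'm) cat \<Rightarrow> bool" where
  "category C \<longleftrightarrow>
     (\<forall>f\<in>Arr C. Dom C f \<in> Obj C \<and> Cod C f \<in> Obj C)
   \<and> (\<forall>a\<in>Obj C. Idn C a \<in> Arr C \<and> Dom C (Idn C a) = a \<and> Cod C (Idn C a) = a)
   \<and> (\<forall>f\<in>Arr C. \<forall>g\<in>Arr C. Cod C f = Dom C g \<longrightarrow>
        Cmp C g f \<in> Arr C \<and> Dom C (Cmp C g f) = Dom C f \<and> Cod C (Cmp C g f) = Cod C g)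
   \<and> (\<forall>f\<in>Arr C. Cmp C f (Idn C (Dom C f)) = f \<and> Cmp C (Idn C (Cod C f)) f = f)
   \<and> (\<forall>f\<in>Arr C. \<forall>g\<in>Arr C. \<forall>h\<in>Arr C. Cod C f = Dom C g \<longrightarrow> Cod C g = Dom C h \<longrightarrow>
        Cmp C h (Cmp C g f) = Cmp C (Cmp C h g) f)"

definition iso :: "('o, 'm) cat \<Rightarrow> 'm \<Rightarrow> bool" where
  "iso C f \<longleftrightarrow> f \<in> Arr C \<and> (\<exists>g\<in>Arr C. Dom C g = Cod C f \<and> Cod C g = Dom C f \<and>
     Cmp C g f = Idn C (Dom C f) \<and> Cmp C f g = Idn C (Cod C f))"

text \<open>Square  p : P \<rightarrow> X, q : P \<rightarrow> Y, f : X \<rightarrow> Z, g : Y \<rightarrow> Z with f p = g q is a pullback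
  of the cospan (f, g). Then q is the pullback of f along g.\<close>
definition is_pullback :: "('o, 'm) cat \<Rightarrow> 'm \<Rightarrow> 'm \<Rightarrow> 'm \<Rightarrow> 'm \<Rightarrow> bool" where
  "is_pullback C f g p q \<longleftrightarrow>
     f \<in> Arr C \<and> g \<in> Arr C \<and> p \<in> Arr C \<and> q \<in> Arr C
   \<and> Cod C f = Cod C g \<and> Dom C p = Dom C q \<and> Cod C p = Dom C f \<and> Cod C q = Dom C g
   \<and> Cmp C f p = Cmp C g q
   \<and> (\<forall>x\<in>Arr C. \<forall>y\<in>Arr C. Dom C x = Dom C y \<longrightarrow> Cod C x = Dom C f \<longrightarrow> Cod C y = Dom C g \<longrightarrow>
        Cmp C f x = Cmp C g y \<longrightarrow>
        (\<exists>!u. u \<in> Arr C \<and> Dom C u = Dom C x \<and> Cod C u = Dom C p \<and>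
              Cmp C p u = x \<and> Cmp C q u = y))"

definition has_pullbacks :: "('o, 'm) cat \<Rightarrow> bool" where
  "has_pullbacks C \<longleftrightarrow> (\<forall>f\<in>Arr C. \<forall>g\<in>Arr C. Cod C f = Cod C g \<longrightarrow>
      (\<exists>p q. is_pullback C f g p q))"

definition ofs :: "('o, 'm) cat \<Rightarrow> 'm set \<Rightarrow> 'm set \<Rightarrow> bool" where
  "ofs C E M \<longleftrightarrow>
     E \<subseteq> Arr C \<and> M \<subseteq> Arr C
   \<and> (\<forall>f. iso C f \<longrightarrow> f \<in> E) \<and> (\<forall>f. iso C f \<longrightarrow> f \<in> M)
   \<and> (\<forall>f\<in>E. \<forall>g\<in>E. Cod C f = Dom C g \<longrightarrow> Cmp C g f \<in> E)
   \<and> (\<forall>f\<in>M. \<forall>g\<in>M. Cod C f = Dom C g \<longrightarrow> Cmp C g f \<in> M)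
   \<and> (\<forall>e\<in>E. \<forall>m\<in>M. \<forall>f\<in>Arr C. \<forall>g\<in>Arr C.
        Dom C f = Dom C e \<longrightarrow> Cod C f = Dom C m \<longrightarrow> Dom C g = Cod C e \<longrightarrow> Cod C g = Cod C m \<longrightarrow>
        Cmp C g e = Cmp C m f \<longrightarrow>
        (\<exists>!d. d \<in> Arr C \<and> Dom C d = Cod C e \<and> Cod C d = Dom C m \<and>
              Cmp C d e = f \<and> Cmp C m d = g))
   \<and> (\<forall>f\<in>Arr C. \<exists>e\<in>E. \<exists>m\<in>M. Cod C e = Dom C m \<and> Cmp C m e = f)"

definition stable_ofs :: "('o, 'm) cat \<Rightarrow> 'm set \<Rightarrow> 'm set \<Rightarrow> bool" where
  "stable_ofs C E M \<longleftrightarrow> ofs C E M \<and>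
     (\<forall>f g p q. is_pullback C f g p q \<longrightarrow> f \<in> E \<longrightarrow> q \<in> E)"

record ('ao, 'am, 'do, 'dm) ftor =
  Fo :: "'ao \<Rightarrow> 'do"
  Fm :: "'am \<Rightarrow> 'dm"

definition "functor" :: "('ao, 'am) cat \<Rightarrow> ('do, 'dm) cat \<Rightarrow> ('ao, 'am, 'do, 'dm) ftor \<Rightarrow> bool" where
  "functor A D F \<longleftrightarrow>
     (\<forall>a\<in>Obj A. Fo F a \<in> Obj D) \<and> (\<forall>a. a \<notin> Obj A \<longrightarrow> Fo F a = undefined)
   \<and> (\<forall>f\<in>Arr A. Fm F f \<in> Arr D \<and> Dom D (Fm F f) = Fo F (Dom A f) \<and> Cod D (Fm F f) = Fo F (Cod A f))
   \<and> (\<forall>f. f \<notin> Arr A \<longrightarrow> Fm F f = undefined)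
   \<and> (\<forall>a\<in>Obj A. Fm F (Idn A a) = Idn D (Fo F a))
   \<and> (\<forall>f\<in>Arr A. \<forall>g\<in>Arr A. Cod A f = Dom A g \<longrightarrow> Fm F (Cmp A g f) = Cmp D (Fm F g) (Fm F f))"

record ('ao, 'am, 'do, 'dm) ntrans =
  NSrc :: "('ao, 'am, 'do, 'dm) ftor"
  NTgt :: "('ao, 'am, 'do, 'dm) ftor"
  NCmp :: "'ao \<Rightarrow> 'dm"

definition nat_trans :: "('ao, 'am) cat \<Rightarrow> ('do, 'dm) cat \<Rightarrow> ('ao, 'am, 'do, 'dm) ntrans \<Rightarrow> bool" where
  "nat_trans A D \<eta> \<longleftrightarrow>
     functor A D (NSrc \<eta>) \<and> functor A D (NTgt \<eta>)
   \<and> (\<forall>a\<in>Obj A. NCmp \<eta> a \<in> Arr D \<and> Dom D (NCmp \<eta> a) = Fo (NSrc \<eta>) a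
                 \<and> Cod D (NCmp \<eta> a) = Fo (NTgt \<eta>) a)
   \<and> (\<forall>a. a \<notin> Obj A \<longrightarrow> NCmp \<eta> a = undefined)
   \<and> (\<forall>f\<in>Arr A. Cmp D (NCmp \<eta> (Cod A f)) (Fm (NSrc \<eta>) f)
                 = Cmp D (Fm (NTgt \<eta>) f) (NCmp \<eta> (Dom A f)))"

definition cartesian :: "('ao, 'am) cat \<Rightarrow> ('do, 'dm) cat \<Rightarrow> ('ao, 'am, 'do, 'dm) ntrans \<Rightarrow> bool" where
  "cartesian A D \<eta> \<longleftrightarrow> (\<forall>f\<in>Arr A.
     is_pullback D (Fm (NTgt \<eta>) f) (NCmp \<eta> (Cod A f)) (NCmp \<eta> (Dom A f)) (Fm (NSrc \<eta>) f))"

definition CartNt :: "('ao, 'am) cat \<Rightarrow> ('do, 'dm) cat \<Rightarrow>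
    (('ao, 'am, 'do, 'dm) ftor, ('ao, 'am, 'do, 'dm) ntrans) cat" where
  "CartNt A D = \<lparr>
     Obj = {F. functor A D F},
     Arr = {\<eta>. nat_trans A D \<eta> \<and> cartesian A D \<eta>},
     Dom = NSrc,
     Cod = NTgt,
     Cmp = (\<lambda>\<tau> \<sigma>. \<lparr>NSrc = NSrc \<sigma>, NTgt = NTgt \<tau>,
              NCmp = (\<lambda>a. if a \<in> Obj A then Cmp D (NCmp \<tau> a) (NCmp \<sigma> a) else undefined)\<rparr>),
     Idn = (\<lambda>F. \<lparr>NSrc = F, NTgt = F,
              NCmp = (\<lambda>a. if a \<in> Obj A then Idn D (Fo F a) else undefined)\<rparr>) \<rparr>"

definition lift_class :: "('ao, 'am) cat \<Rightarrow> 'dm set \<Rightarrow> ('ao, 'am, 'do, 'dm) ntrans set" where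
  "lift_class A K = {\<eta>. \<forall>a\<in>Obj A. NCmp \<eta> a \<in> K}"

end

(*
  Diagonals are computed componentwise. Given a square of cartesian transformations whose left
  side has components in E and right side components in M, the componentwise diagonals are
  natural by uniqueness of diagonals, and their naturality squares are pullbacks by pullback
  cancellation, since both the square of m and the square of g = m d are pullbacks.

  For factorizations, factor every component \<eta>\<^sub>a = m\<^sub>a e\<^sub>a and let the middle functor act on an
  arrow u by the diagonal of the square formed by e\<^sub>a, m\<^sub>b and the naturality square of \<eta> at u.
  To see that the square of m at u is a pullback, pull m\<^sub>b back along G u and factor \<eta>\<^sub>a through
  this pullback. Because the square of \<eta> is a pullback, the resulting first factor is a pullback
  of e\<^sub>b, hence in E by stability, while the pulled-back copy of m\<^sub>b is in M. So \<eta>\<^sub>a has a second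
  (E,M)-factorization; it is isomorphic to m\<^sub>a e\<^sub>a, which makes the square of m isomorphic to the
  pullback square. The square of e is then a pullback by cancellation.
*)

theory Submission
  imports Defs "HOL-Library.FuncSet"
begin

lemma is_pullbackD:
  assumes "is_pullback C f g p q"
  shows "f \<in> Arr C" "g \<in> Arr C" "p \<in> Arr C" "q \<in> Arr C"
    "Cod C f = Cod C g" "Dom C p = Dom C q" "Cod C p = Dom C f" "Cod C q = Dom C g"
    "Cmp C f p = Cmp C g q"
  using assms unfolding is_pullback_def by blast+

lemma is_pullback_factor:
  assumes "is_pullback C f g p q" "x \<in> Arr C" "y \<in> Arr C" "Dom C x = Dom C y"
    "Cod C x = Dom C f" "Cod C y = Dom C g" "Cmp C f x = Cmp C g y"
  obtains u where "u \<in> Arr C" "Dom C u = Dom C x" "Cod C u = Dom C p"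
    "Cmp C p u = x" "Cmp C q u = y"
  using assms unfolding is_pullback_def by metis

lemma is_pullbackI:
  assumes "f \<in> Arr C" "g \<in> Arr C" "p \<in> Arr C" "q \<in> Arr C"
    "Cod C f = Cod C g" "Dom C p = Dom C q" "Cod C p = Dom C f" "Cod C q = Dom C g"
    "Cmp C f p = Cmp C g q"
    and factor: "\<And>x y. x \<in> Arr C \<Longrightarrow> y \<in> Arr C \<Longrightarrow> Dom C x = Dom C y \<Longrightarrow>
      Cod C x = Dom C f \<Longrightarrow> Cod C y = Dom C g \<Longrightarrow> Cmp C f x = Cmp C g y \<Longrightarrow>
      \<exists>u. u \<in> Arr C \<and> Dom C u = Dom C x \<and> Cod C u = Dom C p \<and> Cmp C p u = x \<and> Cmp C q u = y"
    and unique: "\<And>u v. u \<in> Arr C \<Longrightarrow> v \<in> Arr C \<Longrightarrow> Dom C u = Dom C v \<Longrightarrow>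
      Cod C u = Dom C p \<Longrightarrow> Cod C v = Dom C p \<Longrightarrow>
      Cmp C p u = Cmp C p v \<Longrightarrow> Cmp C q u = Cmp C q v \<Longrightarrow> u = v"
  shows "is_pullback C f g p q"
  unfolding is_pullback_def
proof (intro conjI ballI impI assms(1-9))
  fix x y
  assume "x \<in> Arr C" "y \<in> Arr C" "Dom C x = Dom C y" "Cod C x = Dom C f" "Cod C y = Dom C g"
    "Cmp C f x = Cmp C g y"
  from factor[OF this] show "\<exists>!u. u \<in> Arr C \<and> Dom C u = Dom C x \<and> Cod C u = Dom C p
      \<and> Cmp C p u = x \<and> Cmp C q u = y"
    using unique by metis
qed

locale category_axioms =
  fixes C :: "('o, 'm) cat"
  assumes category: "category C"
begin

lemma Dom_in_Obj [simp]: "f \<in> Arr C \<Longrightarrow> Dom C f \<in> Obj C"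
  and Cod_in_Obj [simp]: "f \<in> Arr C \<Longrightarrow> Cod C f \<in> Obj C"
  and Idn_in_Arr [simp]: "a \<in> Obj C \<Longrightarrow> Idn C a \<in> Arr C"
  and Dom_Idn [simp]: "a \<in> Obj C \<Longrightarrow> Dom C (Idn C a) = a"
  and Cod_Idn [simp]: "a \<in> Obj C \<Longrightarrow> Cod C (Idn C a) = a"
  and Cmp_in_Arr [simp]: "f \<in> Arr C \<Longrightarrow> g \<in> Arr C \<Longrightarrow> Cod C f = Dom C g \<Longrightarrow> Cmp C g f \<in> Arr C"
  and Dom_Cmp [simp]: "f \<in> Arr C \<Longrightarrow> g \<in> Arr C \<Longrightarrow> Cod C f = Dom C g \<Longrightarrow> Dom C (Cmp C g f) = Dom C f"
  and Cod_Cmp [simp]: "f \<in> Arr C \<Longrightarrow> g \<in> Arr C \<Longrightarrow> Cod C f = Dom C g \<Longrightarrow> Cod C (Cmp C g f) = Cod C g"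
  using category unfolding category_def by blast+

lemma Cmp_Idn_right [simp]: "f \<in> Arr C \<Longrightarrow> Dom C f = a \<Longrightarrow> Cmp C f (Idn C a) = f"
  and Cmp_Idn_left [simp]: "f \<in> Arr C \<Longrightarrow> Cod C f = a \<Longrightarrow> Cmp C (Idn C a) f = f"
  using category unfolding category_def by blast+

lemma Cmp_assoc:
  "f \<in> Arr C \<Longrightarrow> g \<in> Arr C \<Longrightarrow> h \<in> Arr C \<Longrightarrow> Cod C f = Dom C g \<Longrightarrow> Cod C g = Dom C h \<Longrightarrow>
   Cmp C h (Cmp C g f) = Cmp C (Cmp C h g) f"
  using category unfolding category_def by blast

lemma Cmp_square_paste:
  assumes "Cmp C a x = Cmp C y b" "Cmp C c y = Cmp C z d"
    and "a \<in> Arr C" "b \<in> Arr C" "c \<in> Arr C" "d \<in> Arr C" "x \<in> Arr C" "y \<in> Arr C" "z \<in> Arr C"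
    and "Cod C x = Dom C a" "Cod C b = Dom C y" "Cod C y = Dom C c" "Cod C a = Dom C c"
      "Cod C b = Dom C d" "Cod C d = Dom C z"
  shows "Cmp C (Cmp C c a) x = Cmp C z (Cmp C d b)"
proof -
  note types = assms(3-)
  have "Cmp C (Cmp C c a) x = Cmp C c (Cmp C a x)"
    using types by (simp add: Cmp_assoc)
  also have "\<dots> = Cmp C (Cmp C c y) b"
    using assms(1) types by (simp add: Cmp_assoc)
  also have "\<dots> = Cmp C z (Cmp C d b)"
    using assms(2) types by (simp add: Cmp_assoc)
  finally show ?thesis .
qed

lemma is_pullback_eqI:
  assumes pb: "is_pullback C f g p q" and "u \<in> Arr C" "v \<in> Arr C" "Dom C u = Dom C v"
    "Cod C u = Dom C p" "Cod C v = Dom C p" "Cmp C p u = Cmp C p v" "Cmp C q u = Cmp C q v"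
  shows "u = v"
proof -
  note pb' = is_pullbackD[OF pb]
  let ?x = "Cmp C p u" and ?y = "Cmp C q u"
  have "?x \<in> Arr C" "?y \<in> Arr C" "Dom C ?x = Dom C ?y" "Cod C ?x = Dom C f" "Cod C ?y = Dom C g"
    using pb' assms by simp_all
  moreover have "Cmp C f ?x = Cmp C g ?y"
    using pb' assms by (metis Cmp_assoc)
  ultimately have "\<exists>!w. w \<in> Arr C \<and> Dom C w = Dom C ?x \<and> Cod C w = Dom C p
      \<and> Cmp C p w = ?x \<and> Cmp C q w = ?y"
    using pb unfolding is_pullback_def by blast
  moreover have "Dom C ?x = Dom C u"
    using pb' assms by simp
  ultimately show ?thesis
    using assms(2-8) by metis
qed

lemma is_pullback_sym:
  assumes pb: "is_pullback C f g p q"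
  shows "is_pullback C g f q p"
proof (rule is_pullbackI)
  note pb' = is_pullbackD[OF pb]
  fix x y
  assume "x \<in> Arr C" "y \<in> Arr C" "Dom C x = Dom C y" "Cod C x = Dom C g" "Cod C y = Dom C f"
    "Cmp C g x = Cmp C f y"
  then show "\<exists>u. u \<in> Arr C \<and> Dom C u = Dom C x \<and> Cod C u = Dom C q \<and> Cmp C q u = x \<and> Cmp C p u = y"
    using is_pullback_factor[OF pb, of y x] pb' by metis
qed (use is_pullbackD[OF pb] is_pullback_eqI[OF pb] in simp_all)

lemma is_pullback_paste:
  assumes bot: "is_pullback C f g p q" and top: "is_pullback C q g' p' q'"
  shows "is_pullback C f (Cmp C g g') (Cmp C p p') q'"
proof -
  note B = is_pullbackD[OF bot] and T = is_pullbackD[OF top]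
  have top_comm: "Cmp C q (Cmp C p' w) = Cmp C g' (Cmp C q' w)"
    if "w \<in> Arr C" "Cod C w = Dom C p'" for w
    using that T by (simp add: Cmp_assoc)
  show ?thesis
  proof (rule is_pullbackI)
    show "Cmp C f (Cmp C p p') = Cmp C (Cmp C g g') q'"
      using Cmp_square_paste[of g' q' q p' g f p] B T by simp
  next
    fix x y
    assume xy: "x \<in> Arr C" "y \<in> Arr C" "Dom C x = Dom C y" "Cod C x = Dom C f"
      "Cod C y = Dom C (Cmp C g g')" "Cmp C f x = Cmp C (Cmp C g g') y"
    then have y: "Cod C y = Dom C g'" "Cmp C f x = Cmp C g (Cmp C g' y)"
      using B T by (simp_all add: Cmp_assoc)
    obtain u where u: "u \<in> Arr C" "Dom C u = Dom C x" "Cod C u = Dom C p"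
      "Cmp C p u = x" "Cmp C q u = Cmp C g' y"
      by (rule is_pullback_factor[OF bot, of x "Cmp C g' y"]) (use xy(1-4) y B T in simp_all)
    obtain w where w: "w \<in> Arr C" "Dom C w = Dom C u" "Cod C w = Dom C p'"
      "Cmp C p' w = u" "Cmp C q' w = y"
      by (rule is_pullback_factor[OF top, of u y]) (use xy(1-4) y u B T in simp_all)
    have "Cmp C (Cmp C p p') w = x"
      using w u B T by (simp add: Cmp_assoc[symmetric])
    then show "\<exists>w. w \<in> Arr C \<and> Dom C w = Dom C x \<and> Cod C w = Dom C (Cmp C p p')
        \<and> Cmp C (Cmp C p p') w = x \<and> Cmp C q' w = y"
      using w u B T by auto
  next
    fix u v
    assume uv: "u \<in> Arr C" "v \<in> Arr C" "Dom C u = Dom C v" "Cod C u = Dom C (Cmp C p p')"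
      "Cod C v = Dom C (Cmp C p p')" "Cmp C (Cmp C p p') u = Cmp C (Cmp C p p') v"
      "Cmp C q' u = Cmp C q' v"
    then have cod: "Cod C u = Dom C p'" "Cod C v = Dom C p'"
      using B T by simp_all
    note uv = uv(1-3,6-7)
    have "Cmp C p' u = Cmp C p' v"
    proof (rule is_pullback_eqI[OF bot])
      show "Cmp C p (Cmp C p' u) = Cmp C p (Cmp C p' v)"
        using uv cod B T by (simp add: Cmp_assoc)
      show "Cmp C q (Cmp C p' u) = Cmp C q (Cmp C p' v)"
        using top_comm[of u] top_comm[of v] uv cod by simp
    qed (use uv cod B T in simp_all)
    then show "u = v"
      using is_pullback_eqI[OF top] uv cod by simp
  qed (use B T in simp_all)
qed

lemma is_pullback_cancel:
  assumes bot: "is_pullback C f g p q" and outer: "is_pullback C f (Cmp C g g') (Cmp C p p') q'"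
    and types: "g' \<in> Arr C" "p' \<in> Arr C" "q' \<in> Arr C" "Cod C g' = Dom C g" "Cod C p' = Dom C p"
      "Dom C p' = Dom C q'" "Cod C q' = Dom C g'"
    and comm: "Cmp C q p' = Cmp C g' q'"
  shows "is_pullback C q g' p' q'"
proof (rule is_pullbackI)
  note B = is_pullbackD[OF bot]
  fix x y
  assume xy: "x \<in> Arr C" "y \<in> Arr C" "Dom C x = Dom C y" "Cod C x = Dom C q"
    "Cod C y = Dom C g'" "Cmp C q x = Cmp C g' y"
  have outer_comm: "Cmp C f (Cmp C p x) = Cmp C (Cmp C g g') y"
    using Cmp_square_paste[of g' y q x g f p] xy B types by simp
  obtain u where u: "u \<in> Arr C" "Dom C u = Dom C x" "Cod C u = Dom C (Cmp C p p')"
    "Cmp C (Cmp C p p') u = Cmp C p x" "Cmp C q' u = y"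
    by (rule is_pullback_factor[OF outer, of "Cmp C p x" y]) (use xy outer_comm B types in simp_all)
  have "Cod C u = Dom C p'"
    using u(3) B types by simp
  note u = u(1,2) this u(4,5)
  have "Cmp C p' u = x"
  proof (rule is_pullback_eqI[OF bot])
    show "Cmp C p (Cmp C p' u) = Cmp C p x"
      using u B types by (simp add: Cmp_assoc)
    have "Cmp C q (Cmp C p' u) = Cmp C g' (Cmp C q' u)"
      using u(1-3) B types comm by (simp add: Cmp_assoc)
    then show "Cmp C q (Cmp C p' u) = Cmp C q x"
      using u(5) xy(6) by simp
  qed (use u xy B types in simp_all)
  then show "\<exists>u. u \<in> Arr C \<and> Dom C u = Dom C x \<and> Cod C u = Dom C p' \<and> Cmp C p' u = x \<and> Cmp C q' u = y"
    using u by blast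
next
  fix u v
  assume "u \<in> Arr C" "v \<in> Arr C" "Dom C u = Dom C v" "Cod C u = Dom C p'" "Cod C v = Dom C p'"
    "Cmp C p' u = Cmp C p' v" "Cmp C q' u = Cmp C q' v"
  then show "u = v"
    using is_pullback_eqI[OF outer] is_pullbackD[OF bot] types by (simp add: Cmp_assoc[symmetric])
qed (use is_pullbackD[OF bot] types comm in simp_all)

lemma is_pullback_Cmp_iso:
  assumes pb: "is_pullback C f g p q" and k: "iso C k" "Cod C k = Dom C p"
  shows "is_pullback C f g (Cmp C p k) (Cmp C q k)"
proof -
  note B = is_pullbackD[OF pb]
  obtain l where l: "l \<in> Arr C" "Dom C l = Cod C k" "Cod C l = Dom C k"
    "Cmp C l k = Idn C (Dom C k)" "Cmp C k l = Idn C (Cod C k)"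
    using k(1) unfolding iso_def by blast
  have "k \<in> Arr C"
    using k(1) unfolding iso_def by blast
  note types = this k(2) l(1-3)
  show ?thesis
  proof (rule is_pullbackI)
    fix x y
    assume xy: "x \<in> Arr C" "y \<in> Arr C" "Dom C x = Dom C y" "Cod C x = Dom C f"
      "Cod C y = Dom C g" "Cmp C f x = Cmp C g y"
    obtain u where u: "u \<in> Arr C" "Dom C u = Dom C x" "Cod C u = Dom C p" "Cmp C p u = x" "Cmp C q u = y"
      using is_pullback_factor[OF pb xy] .
    have "Cmp C k (Cmp C l u) = u"
      using u(1,3) B types l(5) by (simp add: Cmp_assoc)
    then have "Cmp C (Cmp C p k) (Cmp C l u) = x" "Cmp C (Cmp C q k) (Cmp C l u) = y"
      using u B types by (simp_all add: Cmp_assoc[symmetric])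
    then show "\<exists>w. w \<in> Arr C \<and> Dom C w = Dom C x \<and> Cod C w = Dom C (Cmp C p k)
        \<and> Cmp C (Cmp C p k) w = x \<and> Cmp C (Cmp C q k) w = y"
      using u B types by (intro exI[of _ "Cmp C l u"]) simp
  next
    fix u v
    assume uv: "u \<in> Arr C" "v \<in> Arr C" "Dom C u = Dom C v" "Cod C u = Dom C (Cmp C p k)"
      "Cod C v = Dom C (Cmp C p k)" "Cmp C (Cmp C p k) u = Cmp C (Cmp C p k) v"
      "Cmp C (Cmp C q k) u = Cmp C (Cmp C q k) v"
    then have cod: "Cod C u = Dom C k" "Cod C v = Dom C k"
      using B types by simp_all
    note uv = uv(1-3,6-7)
    have "Cmp C k u = Cmp C k v"
      by (rule is_pullback_eqI[OF pb]) (use uv cod B types in \<open>simp_all add: Cmp_assoc\<close>)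
    then have "Cmp C (Cmp C l k) u = Cmp C (Cmp C l k) v"
      using uv cod types by (simp add: Cmp_assoc[symmetric])
    then show "u = v"
      using uv cod types l(4) by simp
  qed (use B types in \<open>simp_all add: Cmp_assoc\<close>)
qed

end

definition filler :: "('o, 'm) cat \<Rightarrow> 'm \<Rightarrow> 'm \<Rightarrow> 'm \<Rightarrow> 'm \<Rightarrow> 'm \<Rightarrow> bool" where
  "filler C e m f g d \<longleftrightarrow>
     d \<in> Arr C \<and> Dom C d = Cod C e \<and> Cod C d = Dom C m \<and> Cmp C d e = f \<and> Cmp C m d = g"

lemma fillerD:
  assumes "filler C e m f g d"
  shows "d \<in> Arr C" "Dom C d = Cod C e" "Cod C d = Dom C m" "Cmp C d e = f" "Cmp C m d = g"
  using assms unfolding filler_def by blast+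

lemma (in category_axioms) filler_Cmp:
  assumes k: "filler C e m' e' m k" and l: "filler C e' m'' e'' m' l"
    and "e \<in> Arr C" "m'' \<in> Arr C" "Cod C e' = Dom C m'"
  shows "filler C e m'' e'' m (Cmp C l k)"
proof -
  have types: "k \<in> Arr C" "l \<in> Arr C" "Dom C k = Cod C e" "Cod C k = Dom C l" "Cod C l = Dom C m''"
    using k l assms(5) unfolding filler_def by auto
  have "Cmp C (Cmp C l k) e = Cmp C l (Cmp C k e)"
    using types assms(3) by (simp add: Cmp_assoc)
  moreover have "Cmp C m'' (Cmp C l k) = Cmp C (Cmp C m'' l) k"
    using types assms(4) by (simp add: Cmp_assoc)
  ultimately show ?thesis
    using k l types assms(3,4) unfolding filler_def by simp
qed

lemma ofsI:
  assumes "E \<subseteq> Arr C" "M \<subseteq> Arr C"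
    and "\<And>f. iso C f \<Longrightarrow> f \<in> E" "\<And>f. iso C f \<Longrightarrow> f \<in> M"
    and "\<And>f g. f \<in> E \<Longrightarrow> g \<in> E \<Longrightarrow> Cod C f = Dom C g \<Longrightarrow> Cmp C g f \<in> E"
    and "\<And>f g. f \<in> M \<Longrightarrow> g \<in> M \<Longrightarrow> Cod C f = Dom C g \<Longrightarrow> Cmp C g f \<in> M"
    and "\<And>e m f g. e \<in> E \<Longrightarrow> m \<in> M \<Longrightarrow> f \<in> Arr C \<Longrightarrow> g \<in> Arr C \<Longrightarrow>
      Dom C f = Dom C e \<Longrightarrow> Cod C f = Dom C m \<Longrightarrow> Dom C g = Cod C e \<Longrightarrow> Cod C g = Cod C m \<Longrightarrow>
      Cmp C g e = Cmp C m f \<Longrightarrow> \<exists>!d. filler C e m f g d"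
    and "\<And>f. f \<in> Arr C \<Longrightarrow> \<exists>e\<in>E. \<exists>m\<in>M. Cod C e = Dom C m \<and> Cmp C m e = f"
  shows "ofs C E M"
  unfolding ofs_def filler_def[symmetric]
  by (intro conjI allI ballI impI assms(1,2); rule assms(3-8); assumption)

locale ofs_axioms = category_axioms C for C :: "('o, 'm) cat" +
  fixes E M :: "'m set"
  assumes ofs: "ofs C E M"
begin

lemma E_subset_Arr: "E \<subseteq> Arr C"
  and M_subset_Arr: "M \<subseteq> Arr C"
  and iso_in_E: "iso C f \<Longrightarrow> f \<in> E"
  and iso_in_M: "iso C f \<Longrightarrow> f \<in> M"
  and E_Cmp_closed: "f \<in> E \<Longrightarrow> g \<in> E \<Longrightarrow> Cod C f = Dom C g \<Longrightarrow> Cmp C g f \<in> E"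
  and M_Cmp_closed: "f \<in> M \<Longrightarrow> g \<in> M \<Longrightarrow> Cod C f = Dom C g \<Longrightarrow> Cmp C g f \<in> M"
  using ofs unfolding ofs_def by blast+

lemma factorizationD:
  assumes "e \<in> E" "m \<in> M" "Cod C e = Dom C m" "Cmp C m e = f"
  shows "e \<in> Arr C" "m \<in> Arr C" "Dom C e = Dom C f" "Cod C m = Cod C f"
proof -
  show "e \<in> Arr C" "m \<in> Arr C"
    using assms(1,2) E_subset_Arr M_subset_Arr by blast+
  then show "Dom C e = Dom C f" "Cod C m = Cod C f"
    using assms(3,4) by auto
qed

lemma factorization_exists:
  assumes "f \<in> Arr C"
  obtains e m where "e \<in> E" "m \<in> M" "Cod C e = Dom C m" "Cmp C m e = f"
  using ofs assms unfolding ofs_def by blast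

lemma filler_exists:
  assumes "e \<in> E" "m \<in> M" "f \<in> Arr C" "g \<in> Arr C" "Dom C f = Dom C e" "Cod C f = Dom C m"
    "Dom C g = Cod C e" "Cod C g = Cod C m" "Cmp C g e = Cmp C m f"
  obtains d where "filler C e m f g d"
  using ofs assms unfolding ofs_def filler_def by metis

lemma filler_unique:
  assumes "e \<in> E" "m \<in> M" "filler C e m f g d" "filler C e m f g d'"
  shows "d = d'"
proof -
  have types: "e \<in> Arr C" "m \<in> Arr C"
    using assms(1,2) E_subset_Arr M_subset_Arr by blast+
  with assms(3) have "f \<in> Arr C" "g \<in> Arr C" "Dom C f = Dom C e" "Cod C f = Dom C m"
    "Dom C g = Cod C e" "Cod C g = Cod C m" "Cmp C g e = Cmp C m f"
    unfolding filler_def by (auto simp: Cmp_assoc)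
  then have "\<exists>!d. filler C e m f g d"
    using ofs assms(1,2) unfolding ofs_def filler_def by blast
  then show ?thesis
    using assms(3,4) by blast
qed

lemma M_pullback_stable:
  assumes pb: "is_pullback C f g p q" and "f \<in> M"
  shows "q \<in> M"
proof -
  note B = is_pullbackD[OF pb]
  obtain e n where en: "e \<in> E" "n \<in> M" "Cod C e = Dom C n" "Cmp C n e = q"
    using factorization_exists[OF B(4)] .
  note types = factorizationD[OF en]
  obtain d where d: "filler C e f p (Cmp C g n) d"
    by (rule filler_exists[of e f p "Cmp C g n"]) (use B types en assms(2) in \<open>simp_all add: Cmp_assoc[symmetric]\<close>)
  then have "Cmp C f d = Cmp C g n"
    unfolding filler_def by blast
  then obtain u where u: "u \<in> Arr C" "Dom C u = Cod C e" "Cod C u = Dom C p" "Cmp C p u = d" "Cmp C q u = n"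
    using is_pullback_factor[OF pb, of d n] d B types en unfolding filler_def by auto
  have ue: "Cmp C u e = Idn C (Dom C p)"
  proof (rule is_pullback_eqI[OF pb])
    show "Cmp C p (Cmp C u e) = Cmp C p (Idn C (Dom C p))"
      using u d types B unfolding filler_def by (simp add: Cmp_assoc)
    show "Cmp C q (Cmp C u e) = Cmp C q (Idn C (Dom C p))"
      using u en types B by (simp add: Cmp_assoc)
  qed (use u types B in simp_all)
  have "Cmp C (Cmp C e u) e = Cmp C e (Cmp C u e)" "Cmp C n (Cmp C e u) = Cmp C (Cmp C n e) u"
    using u en(3) types B(6) by (simp_all add: Cmp_assoc)
  then have "filler C e n e n (Cmp C e u)" "filler C e n e n (Idn C (Cod C e))"
    using u ue en(3,4) types B unfolding filler_def by simp_all
  then have eu: "Cmp C e u = Idn C (Cod C e)"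
    using filler_unique en(1,2) by blast
  have "iso C e"
    unfolding iso_def using u ue eu types B by auto
  then show "q \<in> M"
    using M_Cmp_closed[OF iso_in_M en(2,3)] en(4) by simp
qed

lemma factorization_unique_iso:
  assumes e: "e \<in> E" "m \<in> M" "Cod C e = Dom C m"
    and e': "e' \<in> E" "m' \<in> M" "Cod C e' = Dom C m'"
    and eq: "Cmp C m e = Cmp C m' e'"
  obtains k where "iso C k" "filler C e m' e' m k"
proof -
  have types: "e \<in> Arr C" "m \<in> Arr C" "e' \<in> Arr C" "m' \<in> Arr C"
    using e e' E_subset_Arr M_subset_Arr by blast+
  then have dom_eq: "Dom C e' = Dom C e" and cod_eq: "Cod C m' = Cod C m"
    using e(3) e'(3) eq by (metis Dom_Cmp Cod_Cmp)+
  obtain k where k: "filler C e m' e' m k"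
    by (rule filler_exists[of e m' e' m]) (use e e' types dom_eq cod_eq eq in simp_all)
  obtain l where l: "filler C e' m e m' l"
    by (rule filler_exists[of e' m e m']) (use e e' types dom_eq cod_eq eq in simp_all)
  have "filler C e m e m (Cmp C l k)"
    using filler_Cmp[OF k l] types e'(3) by blast
  moreover have "filler C e m e m (Idn C (Cod C e))"
    using types e(3) unfolding filler_def by simp
  ultimately have lk: "Cmp C l k = Idn C (Cod C e)"
    using filler_unique e by blast
  have "filler C e' m' e' m' (Cmp C k l)"
    using filler_Cmp[OF l k] types e(3) by blast
  moreover have "filler C e' m' e' m' (Idn C (Cod C e'))"
    using types e'(3) unfolding filler_def by simp
  ultimately have kl: "Cmp C k l = Idn C (Cod C e')"
    using filler_unique e' by blast
  have "iso C k"
    unfolding iso_def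
  proof (intro conjI bexI[of _ l])
    show "k \<in> Arr C" "l \<in> Arr C" "Dom C l = Cod C k" "Cod C l = Dom C k"
      using k l e(3) e'(3) unfolding filler_def by simp_all
    then show "Cmp C l k = Idn C (Dom C k)" "Cmp C k l = Idn C (Cod C k)"
      using k l lk kl e(3) e'(3) unfolding filler_def by simp_all
  qed
  with k show ?thesis
    using that by blast
qed

end

locale stable_ofs_axioms = ofs_axioms +
  assumes has_pullbacks: "has_pullbacks C"
    and stable: "is_pullback C f g p q \<Longrightarrow> f \<in> E \<Longrightarrow> q \<in> E"
begin

lemma is_pullback_pullback_factorization:
  assumes pb: "is_pullback C g y x f"
    and y: "e\<^sub>y \<in> E" "m\<^sub>y \<in> M" "Cod C e\<^sub>y = Dom C m\<^sub>y" "Cmp C m\<^sub>y e\<^sub>y = y"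
  obtains m' p e' where "is_pullback C g m\<^sub>y m' p" "e' \<in> E" "m' \<in> M" "Cod C e' = Dom C m'"
    "Cmp C m' e' = x" "Cmp C p e' = Cmp C e\<^sub>y f"
proof -
  note B = is_pullbackD[OF pb] and Y = factorizationD[OF y]
  obtain m' p where P: "is_pullback C g m\<^sub>y m' p"
    using has_pullbacks B Y unfolding has_pullbacks_def by force
  note P' = is_pullbackD[OF P]
  have "Cmp C g x = Cmp C m\<^sub>y (Cmp C e\<^sub>y f)"
    using B Y y by (simp add: Cmp_assoc)
  then obtain e' where e': "e' \<in> Arr C" "Dom C e' = Dom C x" "Cod C e' = Dom C m'"
    "Cmp C m' e' = x" "Cmp C p e' = Cmp C e\<^sub>y f"
    using is_pullback_factor[OF P, of x "Cmp C e\<^sub>y f"] B Y y by auto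
  \<comment> \<open>the square \<open>p e' = e\<^sub>y f\<close> is a pullback, so \<open>e'\<close> is a pullback of \<open>e\<^sub>y\<close>\<close>
  have "is_pullback C g (Cmp C m\<^sub>y e\<^sub>y) (Cmp C m' e') f"
    using pb y e' by simp
  then have "is_pullback C p e\<^sub>y e' f"
    by (rule is_pullback_cancel[OF P]) (use B P' Y y e' in simp_all)
  then have "e' \<in> E"
    using stable[OF is_pullback_sym] y(1) by blast
  moreover have "m' \<in> M"
    using M_pullback_stable[OF is_pullback_sym[OF P] y(2)] .
  ultimately show ?thesis
    using that P e' by blast
qed

lemma is_pullback_factorization:
  assumes pb: "is_pullback C g y x f"
    and x: "e\<^sub>x \<in> E" "m\<^sub>x \<in> M" "Cod C e\<^sub>x = Dom C m\<^sub>x" "Cmp C m\<^sub>x e\<^sub>x = x"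
    and y: "e\<^sub>y \<in> E" "m\<^sub>y \<in> M" "Cod C e\<^sub>y = Dom C m\<^sub>y" "Cmp C m\<^sub>y e\<^sub>y = y"
    and h: "filler C e\<^sub>x m\<^sub>y (Cmp C e\<^sub>y f) (Cmp C g m\<^sub>x) h"
  shows "is_pullback C g m\<^sub>y m\<^sub>x h" "is_pullback C h e\<^sub>y e\<^sub>x f"
proof -
  note B = is_pullbackD[OF pb] and X = factorizationD[OF x] and Y = factorizationD[OF y]
  obtain m' p e' where P: "is_pullback C g m\<^sub>y m' p" and e': "e' \<in> E" "m' \<in> M" "Cod C e' = Dom C m'"
    "Cmp C m' e' = x" "Cmp C p e' = Cmp C e\<^sub>y f"
    using is_pullback_pullback_factorization[OF pb y] .
  note P' = is_pullbackD[OF P]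
  obtain k where k: "iso C k" "filler C e\<^sub>x m' e' m\<^sub>x k"
    by (rule factorization_unique_iso[of e\<^sub>x m\<^sub>x e' m']) (use x e' in simp_all)
  note k' = fillerD[OF k(2)]
  have "Cmp C (Cmp C p k) e\<^sub>x = Cmp C p (Cmp C k e\<^sub>x)" "Cmp C m\<^sub>y (Cmp C p k) = Cmp C (Cmp C m\<^sub>y p) k"
    "Cmp C (Cmp C g m') k = Cmp C g (Cmp C m' k)"
    using k'(1-3) P' X by (simp_all add: Cmp_assoc)
  then have "filler C e\<^sub>x m\<^sub>y (Cmp C e\<^sub>y f) (Cmp C g m\<^sub>x) (Cmp C p k)"
    using k' P' e' unfolding filler_def by simp
  then have "h = Cmp C p k"
    using filler_unique[OF x(1) y(2) h] by blast
  then show mpb: "is_pullback C g m\<^sub>y m\<^sub>x h"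
    using is_pullback_Cmp_iso[OF P k(1)] k' by simp
  show "is_pullback C h e\<^sub>y e\<^sub>x f"
    by (rule is_pullback_cancel[OF mpb]) (use pb x y fillerD[OF h] B X Y in simp_all)
qed

end

lemma functor_Fm_in_Arr: "functor A D F \<Longrightarrow> u \<in> Arr A \<Longrightarrow> Fm F u \<in> Arr D"
  and functor_Dom_Fm: "functor A D F \<Longrightarrow> u \<in> Arr A \<Longrightarrow> Dom D (Fm F u) = Fo F (Dom A u)"
  and functor_Cod_Fm: "functor A D F \<Longrightarrow> u \<in> Arr A \<Longrightarrow> Cod D (Fm F u) = Fo F (Cod A u)"
  and functor_Fm_Idn: "functor A D F \<Longrightarrow> a \<in> Obj A \<Longrightarrow> Fm F (Idn A a) = Idn D (Fo F a)"
  and functor_Fm_Cmp: "functor A D F \<Longrightarrow> u \<in> Arr A \<Longrightarrow> v \<in> Arr A \<Longrightarrow> Cod A u = Dom A v \<Longrightarrow>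
    Fm F (Cmp A v u) = Cmp D (Fm F v) (Fm F u)"
  unfolding functor_def by blast+

lemma nat_trans_functor_NSrc: "nat_trans A D \<eta> \<Longrightarrow> functor A D (NSrc \<eta>)"
  and nat_trans_functor_NTgt: "nat_trans A D \<eta> \<Longrightarrow> functor A D (NTgt \<eta>)"
  and nat_trans_NCmp_in_Arr: "nat_trans A D \<eta> \<Longrightarrow> a \<in> Obj A \<Longrightarrow> NCmp \<eta> a \<in> Arr D"
  and nat_trans_Dom_NCmp: "nat_trans A D \<eta> \<Longrightarrow> a \<in> Obj A \<Longrightarrow> Dom D (NCmp \<eta> a) = Fo (NSrc \<eta>) a"
  and nat_trans_Cod_NCmp: "nat_trans A D \<eta> \<Longrightarrow> a \<in> Obj A \<Longrightarrow> Cod D (NCmp \<eta> a) = Fo (NTgt \<eta>) a"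
  and nat_trans_NCmp_undefined: "nat_trans A D \<eta> \<Longrightarrow> a \<notin> Obj A \<Longrightarrow> NCmp \<eta> a = undefined"
  and nat_trans_naturality: "nat_trans A D \<eta> \<Longrightarrow> u \<in> Arr A \<Longrightarrow>
    Cmp D (NCmp \<eta> (Cod A u)) (Fm (NSrc \<eta>) u) = Cmp D (Fm (NTgt \<eta>) u) (NCmp \<eta> (Dom A u))"
  unfolding nat_trans_def by blast+

lemma Arr_CartNt_iff: "\<eta> \<in> Arr (CartNt A D) \<longleftrightarrow> nat_trans A D \<eta> \<and> cartesian A D \<eta>"
  by (simp add: CartNt_def)

lemma Cmp_CartNt:
  "Cmp (CartNt A D) \<tau> \<sigma> = \<lparr>NSrc = NSrc \<sigma>, NTgt = NTgt \<tau>,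
     NCmp = \<lambda>a. if a \<in> Obj A then Cmp D (NCmp \<tau> a) (NCmp \<sigma> a) else undefined\<rparr>"
  by (simp add: CartNt_def)

lemma CartNt_simps [simp]:
  "Dom (CartNt A D) = NSrc"
  "Cod (CartNt A D) = NTgt"
  "NSrc (Cmp (CartNt A D) \<tau> \<sigma>) = NSrc \<sigma>"
  "NTgt (Cmp (CartNt A D) \<tau> \<sigma>) = NTgt \<tau>"
  "a \<in> Obj A \<Longrightarrow> NCmp (Cmp (CartNt A D) \<tau> \<sigma>) a = Cmp D (NCmp \<tau> a) (NCmp \<sigma> a)"
  "a \<in> Obj A \<Longrightarrow> NCmp (Idn (CartNt A D) F) a = Idn D (Fo F a)"
  by (simp_all add: CartNt_def)

lemma CartNt_Arr_nat_trans: "\<eta> \<in> Arr (CartNt A D) \<Longrightarrow> nat_trans A D \<eta>"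
  by (simp add: Arr_CartNt_iff)

lemma cartesian_is_pullback:
  "\<eta> \<in> Arr (CartNt A D) \<Longrightarrow> u \<in> Arr A \<Longrightarrow>
    is_pullback D (Fm (NTgt \<eta>) u) (NCmp \<eta> (Cod A u)) (NCmp \<eta> (Dom A u)) (Fm (NSrc \<eta>) u)"
  unfolding Arr_CartNt_iff cartesian_def by blast

lemma CartNt_ArrI:
  assumes "functor A D F" "functor A D G"
    and "\<And>a. a \<in> Obj A \<Longrightarrow> c a \<in> Arr D \<and> Dom D (c a) = Fo F a \<and> Cod D (c a) = Fo G a"
    and "\<And>a. a \<notin> Obj A \<Longrightarrow> c a = undefined"
    and "\<And>u. u \<in> Arr A \<Longrightarrow> is_pullback D (Fm G u) (c (Cod A u)) (c (Dom A u)) (Fm F u)"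
  shows "\<lparr>NSrc = F, NTgt = G, NCmp = c\<rparr> \<in> Arr (CartNt A D)"
proof -
  have "Cmp D (c (Cod A u)) (Fm F u) = Cmp D (Fm G u) (c (Dom A u))" if "u \<in> Arr A" for u
    using is_pullbackD(9)[OF assms(5)[OF that]] by simp
  then have "nat_trans A D \<lparr>NSrc = F, NTgt = G, NCmp = c\<rparr>"
    unfolding nat_trans_def using assms(1-4) by simp
  moreover have "cartesian A D \<lparr>NSrc = F, NTgt = G, NCmp = c\<rparr>"
    unfolding cartesian_def using assms(5) by simp
  ultimately show ?thesis
    unfolding Arr_CartNt_iff ..
qed

lemma CartNt_Arr_eqI:
  assumes "\<sigma> \<in> Arr (CartNt A D)" "\<tau> \<in> Arr (CartNt A D)" "NSrc \<sigma> = NSrc \<tau>" "NTgt \<sigma> = NTgt \<tau>"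
    and "\<And>a. a \<in> Obj A \<Longrightarrow> NCmp \<sigma> a = NCmp \<tau> a"
  shows "\<sigma> = \<tau>"
proof -
  have "NCmp \<sigma> a = NCmp \<tau> a" for a
  proof (cases "a \<in> Obj A")
    case False
    then show ?thesis
      using nat_trans_NCmp_undefined CartNt_Arr_nat_trans assms(1,2) by metis
  qed (use assms(5) in blast)
  then have "NCmp \<sigma> = NCmp \<tau>" ..
  then show ?thesis
    using assms(3,4) by (cases \<sigma>, cases \<tau>) simp
qed

locale functor_category = A: category_axioms A + D: category_axioms D
  for A :: "('ao, 'am) cat" and D :: "('do, 'dm) cat"
begin

text \<open>These rules are instantiated at \<open>A\<close> and \<open>D\<close> because \<open>A\<close> occurs only in their premises,
  where the simplifier could not find it.\<close>
declare functor_Fm_in_Arr[of A D, simp]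
  functor_Dom_Fm[of A D, simp] functor_Cod_Fm[of A D, simp]
  nat_trans_functor_NSrc[of A D, simp] nat_trans_functor_NTgt[of A D, simp]
  nat_trans_NCmp_in_Arr[of A D, simp] nat_trans_Dom_NCmp[of A D, simp]
  nat_trans_Cod_NCmp[of A D, simp] CartNt_Arr_nat_trans[of _ A D, simp]

lemma CartNt_Cmp_in_Arr:
  assumes \<sigma>: "\<sigma> \<in> Arr (CartNt A D)" and \<tau>: "\<tau> \<in> Arr (CartNt A D)" and "NTgt \<sigma> = NSrc \<tau>"
  shows "Cmp (CartNt A D) \<tau> \<sigma> \<in> Arr (CartNt A D)"
proof -
  have "Cmp (CartNt A D) \<tau> \<sigma> = \<lparr>NSrc = NSrc \<sigma>, NTgt = NTgt \<tau>,
      NCmp = \<lambda>a. if a \<in> Obj A then Cmp D (NCmp \<tau> a) (NCmp \<sigma> a) else undefined\<rparr>"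
    by (fact Cmp_CartNt)
  also have "\<dots> \<in> Arr (CartNt A D)"
  proof (rule CartNt_ArrI)
    fix u
    assume u: "u \<in> Arr A"
    show "is_pullback D (Fm (NTgt \<tau>) u)
      ((\<lambda>a. if a \<in> Obj A then Cmp D (NCmp \<tau> a) (NCmp \<sigma> a) else undefined) (Cod A u))
      ((\<lambda>a. if a \<in> Obj A then Cmp D (NCmp \<tau> a) (NCmp \<sigma> a) else undefined) (Dom A u))
      (Fm (NSrc \<sigma>) u)"
      using D.is_pullback_paste[OF cartesian_is_pullback[OF \<tau> u]
          cartesian_is_pullback[OF \<sigma> u, unfolded assms(3)]] u by simp
  qed (use assms in simp_all)
  finally show ?thesis .
qed

lemma iso_CartNt_NCmp:
  assumes "iso (CartNt A D) \<eta>" and a: "a \<in> Obj A"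
  shows "iso D (NCmp \<eta> a)"
proof -
  obtain \<theta> where "\<eta> \<in> Arr (CartNt A D)" "\<theta> \<in> Arr (CartNt A D)" "NSrc \<theta> = NTgt \<eta>" "NTgt \<theta> = NSrc \<eta>"
    and inv: "Cmp (CartNt A D) \<theta> \<eta> = Idn (CartNt A D) (NSrc \<eta>)"
      "Cmp (CartNt A D) \<eta> \<theta> = Idn (CartNt A D) (NTgt \<eta>)"
    using assms(1) unfolding iso_def by auto
  moreover have "Cmp D (NCmp \<theta> a) (NCmp \<eta> a) = Idn D (Fo (NSrc \<eta>) a)"
    "Cmp D (NCmp \<eta> a) (NCmp \<theta> a) = Idn D (Fo (NTgt \<eta>) a)"
    using arg_cong[OF inv(1), of "\<lambda>\<sigma>. NCmp \<sigma> a"] arg_cong[OF inv(2), of "\<lambda>\<sigma>. NCmp \<sigma> a"] a by simp_all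
  ultimately show ?thesis
    unfolding iso_def using a by (intro conjI bexI[of _ "NCmp \<theta> a"]) simp_all
qed

lemma lift_class_Cmp_closed:
  assumes "\<And>f g. f \<in> K \<Longrightarrow> g \<in> K \<Longrightarrow> Cod D f = Dom D g \<Longrightarrow> Cmp D g f \<in> K"
    and "\<sigma> \<in> lift_class A K \<inter> Arr (CartNt A D)" "\<tau> \<in> lift_class A K \<inter> Arr (CartNt A D)"
    and "NTgt \<sigma> = NSrc \<tau>"
  shows "Cmp (CartNt A D) \<tau> \<sigma> \<in> lift_class A K \<inter> Arr (CartNt A D)"
  using assms CartNt_Cmp_in_Arr unfolding lift_class_def by auto

lemma lift_class_iso:
  assumes "\<And>f. iso D f \<Longrightarrow> f \<in> K" and "iso (CartNt A D) \<eta>"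
  shows "\<eta> \<in> lift_class A K \<inter> Arr (CartNt A D)"
  using assms iso_CartNt_NCmp unfolding lift_class_def iso_def[of "CartNt A D"] by blast

lemma filler_CartNt_iff:
  assumes "e \<in> Arr (CartNt A D)" "m \<in> Arr (CartNt A D)" "f \<in> Arr (CartNt A D)" "g \<in> Arr (CartNt A D)"
    and "NSrc f = NSrc e" "NTgt f = NSrc m" "NSrc g = NTgt e" "NTgt g = NTgt m"
  shows "filler (CartNt A D) e m f g d \<longleftrightarrow>
    d \<in> Arr (CartNt A D) \<and> NSrc d = NTgt e \<and> NTgt d = NSrc m \<and>
    (\<forall>a\<in>Obj A. filler D (NCmp e a) (NCmp m a) (NCmp f a) (NCmp g a) (NCmp d a))"
proof
  assume d: "filler (CartNt A D) e m f g d"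
  then have "NCmp (Cmp (CartNt A D) d e) a = NCmp f a" "NCmp (Cmp (CartNt A D) m d) a = NCmp g a" for a
    unfolding filler_def by simp_all
  then show "d \<in> Arr (CartNt A D) \<and> NSrc d = NTgt e \<and> NTgt d = NSrc m \<and>
    (\<forall>a\<in>Obj A. filler D (NCmp e a) (NCmp m a) (NCmp f a) (NCmp g a) (NCmp d a))"
    using d assms unfolding filler_def by auto
next
  assume d: "d \<in> Arr (CartNt A D) \<and> NSrc d = NTgt e \<and> NTgt d = NSrc m \<and>
    (\<forall>a\<in>Obj A. filler D (NCmp e a) (NCmp m a) (NCmp f a) (NCmp g a) (NCmp d a))"
  have "Cmp (CartNt A D) d e = f"
    by (rule CartNt_Arr_eqI) (use assms d CartNt_Cmp_in_Arr in \<open>auto simp: filler_def\<close>)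
  moreover have "Cmp (CartNt A D) m d = g"
    by (rule CartNt_Arr_eqI) (use assms d CartNt_Cmp_in_Arr in \<open>auto simp: filler_def\<close>)
  ultimately show "filler (CartNt A D) e m f g d"
    using d unfolding filler_def by simp
qed

end

locale functor_category_ofs = functor_category A D + D: ofs_axioms D E M
  for A :: "('ao, 'am) cat" and D :: "('do, 'dm) cat" and E M :: "'dm set"
begin

lemma componentwise_filler_naturality:
  assumes e: "e \<in> lift_class A E \<inter> Arr (CartNt A D)" and m: "m \<in> lift_class A M \<inter> Arr (CartNt A D)"
    and f: "f \<in> Arr (CartNt A D)" and g: "g \<in> Arr (CartNt A D)"
    and types: "NSrc f = NSrc e" "NTgt f = NSrc m" "NSrc g = NTgt e" "NTgt g = NTgt m"
    and c: "\<forall>a\<in>Obj A. filler D (NCmp e a) (NCmp m a) (NCmp f a) (NCmp g a) (c a)"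
    and u: "u \<in> Arr A"
  shows "Cmp D (c (Cod A u)) (Fm (NTgt e) u) = Cmp D (Fm (NSrc m) u) (c (Dom A u))"
proof -
  let ?a = "Dom A u" and ?b = "Cod A u"
  have ab: "?a \<in> Obj A" "?b \<in> Obj A"
    using u by simp_all
  note c_a = fillerD[OF c[rule_format, OF ab(1)]]
    and c_b = fillerD[OF c[rule_format, OF ab(2)]]
  have nat_e: "Cmp D (NCmp e ?b) (Fm (NSrc e) u) = Cmp D (Fm (NTgt e) u) (NCmp e ?a)"
    and nat_f: "Cmp D (NCmp f ?b) (Fm (NSrc e) u) = Cmp D (Fm (NSrc m) u) (NCmp f ?a)"
    and nat_g: "Cmp D (NCmp g ?b) (Fm (NTgt e) u) = Cmp D (Fm (NTgt m) u) (NCmp g ?a)"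
    and nat_m: "Cmp D (NCmp m ?b) (Fm (NSrc m) u) = Cmp D (Fm (NTgt m) u) (NCmp m ?a)"
    using nat_trans_naturality[of A D e u] nat_trans_naturality[of A D f u]
      nat_trans_naturality[of A D g u] nat_trans_naturality[of A D m u] u e m f g types
    by simp_all
  note typing = u ab e m types c_a(1-3) c_b(1-3)
  \<comment> \<open>both sides are fillers of the same square, with \<open>e\<^sub>a \<in> E\<close> and \<open>m\<^sub>b \<in> M\<close>\<close>
  have "Cmp D (Cmp D (c ?b) (Fm (NTgt e) u)) (NCmp e ?a) = Cmp D (c ?b) (Cmp D (NCmp e ?b) (Fm (NSrc e) u))"
    using typing nat_e[symmetric] by (simp add: D.Cmp_assoc[symmetric])
  also have "\<dots> = Cmp D (NCmp f ?b) (Fm (NSrc e) u)"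
    using typing c_b(4) by (simp add: D.Cmp_assoc)
  moreover have "Cmp D (NCmp m ?b) (Cmp D (c ?b) (Fm (NTgt e) u)) = Cmp D (NCmp g ?b) (Fm (NTgt e) u)"
    using typing c_b(5) by (simp add: D.Cmp_assoc)
  ultimately have fill1: "filler D (NCmp e ?a) (NCmp m ?b) (Cmp D (NCmp f ?b) (Fm (NSrc e) u))
      (Cmp D (NCmp g ?b) (Fm (NTgt e) u)) (Cmp D (c ?b) (Fm (NTgt e) u))"
    using typing unfolding filler_def by simp
  have "Cmp D (NCmp m ?b) (Cmp D (Fm (NSrc m) u) (c ?a)) = Cmp D (Cmp D (Fm (NTgt m) u) (NCmp m ?a)) (c ?a)"
    using typing nat_m by (simp add: D.Cmp_assoc)
  also have "\<dots> = Cmp D (NCmp g ?b) (Fm (NTgt e) u)"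
    using typing c_a(5) nat_g by (simp add: D.Cmp_assoc[symmetric])
  moreover have "Cmp D (Cmp D (Fm (NSrc m) u) (c ?a)) (NCmp e ?a) = Cmp D (NCmp f ?b) (Fm (NSrc e) u)"
    using typing c_a(4) nat_f by (simp add: D.Cmp_assoc[symmetric])
  ultimately have fill2: "filler D (NCmp e ?a) (NCmp m ?b) (Cmp D (NCmp f ?b) (Fm (NSrc e) u))
      (Cmp D (NCmp g ?b) (Fm (NTgt e) u)) (Cmp D (Fm (NSrc m) u) (c ?a))"
    using typing unfolding filler_def by simp
  show ?thesis
    using D.filler_unique[OF _ _ fill1 fill2] e m ab unfolding lift_class_def by blast
qed

lemma CartNt_componentwise_filler:
  assumes e: "e \<in> lift_class A E \<inter> Arr (CartNt A D)" and m: "m \<in> lift_class A M \<inter> Arr (CartNt A D)"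
    and f: "f \<in> Arr (CartNt A D)" and g: "g \<in> Arr (CartNt A D)"
    and types: "NSrc f = NSrc e" "NTgt f = NSrc m" "NSrc g = NTgt e" "NTgt g = NTgt m"
    and c: "\<forall>a\<in>Obj A. filler D (NCmp e a) (NCmp m a) (NCmp f a) (NCmp g a) (c a)"
  shows "\<lparr>NSrc = NTgt e, NTgt = NSrc m, NCmp = restrict c (Obj A)\<rparr> \<in> Arr (CartNt A D)"
proof (rule CartNt_ArrI)
  fix u
  assume u: "u \<in> Arr A"
  let ?a = "Dom A u" and ?b = "Cod A u"
  have ab: "?a \<in> Obj A" "?b \<in> Obj A"
    using u by simp_all
  note c_a = fillerD[OF c[rule_format, OF ab(1)]]
    and c_b = fillerD[OF c[rule_format, OF ab(2)]]
  \<comment> \<open>cancel the cartesian square of \<open>m\<close> from that of \<open>g = m d\<close>\<close>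
  have "is_pullback D (Fm (NSrc m) u) (c ?b) (c ?a) (Fm (NTgt e) u)"
  proof (rule D.is_pullback_cancel)
    show "is_pullback D (Fm (NTgt m) u) (NCmp m ?b) (NCmp m ?a) (Fm (NSrc m) u)"
      using cartesian_is_pullback[of m A D u] m u by simp
    show "is_pullback D (Fm (NTgt m) u) (Cmp D (NCmp m ?b) (c ?b)) (Cmp D (NCmp m ?a) (c ?a)) (Fm (NTgt e) u)"
      using cartesian_is_pullback[of g A D u] g u c_a c_b types by simp
  qed (use c_a c_b componentwise_filler_naturality[OF assms u] u ab e m types in simp_all)
  then show "is_pullback D (Fm (NSrc m) u) (restrict c (Obj A) (Cod A u)) (restrict c (Obj A) (Dom A u))
      (Fm (NTgt e) u)"
    using ab by simp
qed (use e m c in \<open>auto simp: filler_def\<close>)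

lemma CartNt_unique_filler:
  assumes e: "e \<in> lift_class A E \<inter> Arr (CartNt A D)" and m: "m \<in> lift_class A M \<inter> Arr (CartNt A D)"
    and f: "f \<in> Arr (CartNt A D)" and g: "g \<in> Arr (CartNt A D)"
    and types: "NSrc f = NSrc e" "NTgt f = NSrc m" "NSrc g = NTgt e" "NTgt g = NTgt m"
    and comm: "Cmp (CartNt A D) g e = Cmp (CartNt A D) m f"
  shows "\<exists>!d. filler (CartNt A D) e m f g d"
proof -
  have E: "NCmp e a \<in> E" and M: "NCmp m a \<in> M" if "a \<in> Obj A" for a
    using e m that unfolding lift_class_def by blast+
  have comm_a: "Cmp D (NCmp g a) (NCmp e a) = Cmp D (NCmp m a) (NCmp f a)" if "a \<in> Obj A" for a
    using arg_cong[OF comm, of "\<lambda>\<sigma>. NCmp \<sigma> a"] that by simp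
  have "\<forall>a\<in>Obj A. \<exists>d. filler D (NCmp e a) (NCmp m a) (NCmp f a) (NCmp g a) d"
  proof
    fix a
    assume a: "a \<in> Obj A"
    show "\<exists>d. filler D (NCmp e a) (NCmp m a) (NCmp f a) (NCmp g a) d"
      by (rule D.filler_exists[of "NCmp e a" "NCmp m a" "NCmp f a" "NCmp g a"])
        (use a e m f g types comm_a E M in auto)
  qed
  then obtain c where c: "\<forall>a\<in>Obj A. filler D (NCmp e a) (NCmp m a) (NCmp f a) (NCmp g a) (c a)"
    using bchoice by metis
  define d where "d = \<lparr>NSrc = NTgt e, NTgt = NSrc m, NCmp = restrict c (Obj A)\<rparr>"
  have d: "d \<in> Arr (CartNt A D)"
    using CartNt_componentwise_filler[OF e m f g types c] unfolding d_def .
  then have "filler (CartNt A D) e m f g d"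
    using filler_CartNt_iff e m f g types c unfolding d_def by simp
  moreover have "d' = d" if d': "filler (CartNt A D) e m f g d'" for d'
  proof (rule CartNt_Arr_eqI)
    show "d' \<in> Arr (CartNt A D)" "NSrc d' = NSrc d" "NTgt d' = NTgt d"
      using d' filler_CartNt_iff e m f g types unfolding d_def by simp_all
    fix a
    assume a: "a \<in> Obj A"
    then have "filler D (NCmp e a) (NCmp m a) (NCmp f a) (NCmp g a) (NCmp d' a)"
      using d' filler_CartNt_iff e m f g types by simp
    then show "NCmp d' a = NCmp d a"
      using D.filler_unique[OF E[OF a] M[OF a]] c a unfolding d_def by simp
  qed (use d in simp)
  ultimately show ?thesis
    by blast
qed

end

locale nat_trans_factorization = functor_category_ofs A D E M
  for A :: "('ao, 'am) cat" and D :: "('do, 'dm) cat" and E M :: "'dm set" +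
  fixes \<eta> :: "('ao, 'am, 'do, 'dm) ntrans" and ec mc :: "'ao \<Rightarrow> 'dm"
  assumes nat_trans: "nat_trans A D \<eta>"
    and factorization: "a \<in> Obj A \<Longrightarrow>
      ec a \<in> E \<and> mc a \<in> M \<and> Cod D (ec a) = Dom D (mc a) \<and> Cmp D (mc a) (ec a) = NCmp \<eta> a"
begin

definition middle_filler :: "'am \<Rightarrow> 'dm \<Rightarrow> bool" where
  "middle_filler u h \<longleftrightarrow> filler D (ec (Dom A u)) (mc (Cod A u))
     (Cmp D (ec (Cod A u)) (Fm (NSrc \<eta>) u)) (Cmp D (Fm (NTgt \<eta>) u) (mc (Dom A u))) h"

lemma factorization_typing:
  assumes "a \<in> Obj A"
  shows "ec a \<in> Arr D" "mc a \<in> Arr D" "Dom D (ec a) = Fo (NSrc \<eta>) a" "Cod D (mc a) = Fo (NTgt \<eta>) a"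
    "Cod D (ec a) = Dom D (mc a)"
  using D.factorizationD[of "ec a" "mc a" "NCmp \<eta> a"] factorization[OF assms] nat_trans assms by simp_all

lemma middle_filler_exists:
  assumes u: "u \<in> Arr A"
  obtains h where "middle_filler u h"
proof -
  let ?F = "NSrc \<eta>" and ?G = "NTgt \<eta>" and ?a = "Dom A u" and ?b = "Cod A u"
  note typing = factorization_typing[of ?a] factorization_typing[of ?b] factorization[of ?a]
    factorization[of ?b] u nat_trans
  have "Cmp D (Cmp D (Fm ?G u) (mc ?a)) (ec ?a) = Cmp D (Fm ?G u) (NCmp \<eta> ?a)"
    using typing by (simp add: D.Cmp_assoc[symmetric])
  also have "\<dots> = Cmp D (NCmp \<eta> ?b) (Fm ?F u)"
    using nat_trans_naturality[OF nat_trans u] by simp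
  also have "\<dots> = Cmp D (mc ?b) (Cmp D (ec ?b) (Fm ?F u))"
    using typing by (simp add: D.Cmp_assoc)
  finally have comm: "Cmp D (Cmp D (Fm ?G u) (mc ?a)) (ec ?a) = Cmp D (mc ?b) (Cmp D (ec ?b) (Fm ?F u))" .
  show ?thesis
    by (rule D.filler_exists[of "ec ?a" "mc ?b" "Cmp D (ec ?b) (Fm ?F u)" "Cmp D (Fm ?G u) (mc ?a)"])
      (use typing comm that[unfolded middle_filler_def] in simp_all)
qed

lemma middle_filler_unique:
  assumes "u \<in> Arr A" "middle_filler u h" "middle_filler u h'"
  shows "h = h'"
  using D.filler_unique[OF _ _ assms(2,3)[unfolded middle_filler_def]] factorization assms(1) by simp

lemma middle_filler_Idn:
  assumes a: "a \<in> Obj A"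
  shows "middle_filler (Idn A a) (Idn D (Cod D (ec a)))"
  using a factorization_typing[OF a] nat_trans functor_Fm_Idn[of A D _ a]
  unfolding middle_filler_def filler_def by simp

lemma middle_filler_Cmp:
  assumes u: "u \<in> Arr A" and v: "v \<in> Arr A" and uv: "Cod A u = Dom A v"
    and hu: "middle_filler u h\<^sub>u" and hv: "middle_filler v h\<^sub>v"
  shows "middle_filler (Cmp A v u) (Cmp D h\<^sub>v h\<^sub>u)"
proof -
  let ?F = "NSrc \<eta>" and ?G = "NTgt \<eta>"
  note hu = fillerD[OF hu[unfolded middle_filler_def]] and hv = fillerD[OF hv[unfolded middle_filler_def]]
  note typing = factorization_typing[of "Dom A u"] factorization_typing[of "Cod A u"]
    factorization_typing[of "Cod A v"] u v uv nat_trans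
  have "Cmp D (Cmp D h\<^sub>v h\<^sub>u) (ec (Dom A u)) = Cmp D (ec (Cod A v)) (Cmp D (Fm ?F v) (Fm ?F u))"
    by (rule D.Cmp_square_paste[where y = "ec (Cod A u)"]) (use hu hv typing in simp_all)
  moreover have "Cmp D (Cmp D (Fm ?G v) (Fm ?G u)) (mc (Dom A u)) = Cmp D (mc (Cod A v)) (Cmp D h\<^sub>v h\<^sub>u)"
    by (rule D.Cmp_square_paste[where y = "mc (Cod A u)"]) (use hu hv typing in simp_all)
  ultimately show ?thesis
    using hu hv typing functor_Fm_Cmp[of A D _ u v] unfolding middle_filler_def filler_def by simp
qed

lemma middle_functor_exists:
  obtains H where "functor A D H" "\<And>a. a \<in> Obj A \<Longrightarrow> Fo H a = Cod D (ec a)"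
    "\<And>u. u \<in> Arr A \<Longrightarrow> middle_filler u (Fm H u)"
proof -
  obtain h where h: "\<forall>u\<in>Arr A. middle_filler u (h u)"
    using middle_filler_exists bchoice by metis
  define H where "H = \<lparr>Fo = restrict (\<lambda>a. Cod D (ec a)) (Obj A), Fm = restrict h (Arr A)\<rparr>"
  have h_Idn: "h (Idn A a) = Idn D (Cod D (ec a))" if a: "a \<in> Obj A" for a
    using middle_filler_unique h middle_filler_Idn[OF a] A.Idn_in_Arr[OF a] by blast
  have h_Cmp: "h (Cmp A v u) = Cmp D (h v) (h u)"
    if uv: "u \<in> Arr A" "v \<in> Arr A" "Cod A u = Dom A v" for u v
    using middle_filler_unique h middle_filler_Cmp[OF uv] A.Cmp_in_Arr[OF uv] uv by blast
  have "h u \<in> Arr D" "Dom D (h u) = Cod D (ec (Dom A u))" "Cod D (h u) = Dom D (mc (Cod A u))"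
    if "u \<in> Arr A" for u
    using fillerD[OF h[rule_format, OF that, unfolded middle_filler_def]] by simp_all
  then have "functor A D H"
    unfolding functor_def H_def using factorization_typing h_Idn h_Cmp by auto
  then show ?thesis
    using that h unfolding H_def by simp
qed

end

lemma (in functor_category_ofs) componentwise_factorization_exists:
  assumes "nat_trans A D \<eta>"
  obtains ec mc where "nat_trans_factorization A D E M \<eta> ec mc"
    "\<And>a. a \<notin> Obj A \<Longrightarrow> ec a = undefined" "\<And>a. a \<notin> Obj A \<Longrightarrow> mc a = undefined"
proof -
  have "\<forall>a\<in>Obj A. \<exists>em. fst em \<in> E \<and> snd em \<in> M \<and> Cod D (fst em) = Dom D (snd em)
      \<and> Cmp D (snd em) (fst em) = NCmp \<eta> a"
    using D.factorization_exists assms by (metis fst_conv snd_conv nat_trans_NCmp_in_Arr)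
  then obtain em where "\<forall>a\<in>Obj A. fst (em a) \<in> E \<and> snd (em a) \<in> M
      \<and> Cod D (fst (em a)) = Dom D (snd (em a)) \<and> Cmp D (snd (em a)) (fst (em a)) = NCmp \<eta> a"
    using bchoice by metis
  then have "nat_trans_factorization A D E M \<eta> (restrict (fst \<circ> em) (Obj A)) (restrict (snd \<circ> em) (Obj A))"
    using assms by unfold_locales simp_all
  then show ?thesis
    using that by simp
qed

locale functor_category_stable_ofs = functor_category_ofs A D E M + D: stable_ofs_axioms D E M
  for A :: "('ao, 'am) cat" and D :: "('do, 'dm) cat" and E M :: "'dm set"
begin

lemma CartNt_factorization:
  assumes \<eta>: "\<eta> \<in> Arr (CartNt A D)"
  obtains e m where "e \<in> lift_class A E \<inter> Arr (CartNt A D)" "m \<in> lift_class A M \<inter> Arr (CartNt A D)"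
    "NTgt e = NSrc m" "Cmp (CartNt A D) m e = \<eta>"
proof -
  let ?F = "NSrc \<eta>" and ?G = "NTgt \<eta>"
  obtain ec mc where fac: "nat_trans_factorization A D E M \<eta> ec mc"
    and undefined: "\<And>a. a \<notin> Obj A \<Longrightarrow> ec a = undefined" "\<And>a. a \<notin> Obj A \<Longrightarrow> mc a = undefined"
    using componentwise_factorization_exists[OF CartNt_Arr_nat_trans[OF \<eta>]] by blast
  interpret nat_trans_factorization A D E M \<eta> ec mc
    by (fact fac)
  obtain H where H: "functor A D H" "\<And>a. a \<in> Obj A \<Longrightarrow> Fo H a = Cod D (ec a)"
    and h: "\<And>u. u \<in> Arr A \<Longrightarrow> middle_filler u (Fm H u)"
    using middle_functor_exists by blast
  have pullbacks: "is_pullback D (Fm ?G u) (mc (Cod A u)) (mc (Dom A u)) (Fm H u)"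
    "is_pullback D (Fm H u) (ec (Cod A u)) (ec (Dom A u)) (Fm ?F u)" if u: "u \<in> Arr A" for u
    using D.is_pullback_factorization[OF cartesian_is_pullback[OF \<eta> u] _ _ _ _ _ _ _ _
        h[OF u, unfolded middle_filler_def]] factorization u by simp_all
  define e m where "e = \<lparr>NSrc = ?F, NTgt = H, NCmp = ec\<rparr>" and "m = \<lparr>NSrc = H, NTgt = ?G, NCmp = mc\<rparr>"
  have "e \<in> Arr (CartNt A D)" "m \<in> Arr (CartNt A D)"
    unfolding e_def m_def
    by (rule CartNt_ArrI; use \<eta> H factorization_typing undefined pullbacks in simp)+
  moreover have "Cmp (CartNt A D) m e = \<eta>"
  proof (rule CartNt_Arr_eqI)
    fix a
    assume "a \<in> Obj A"
    then show "NCmp (Cmp (CartNt A D) m e) a = NCmp \<eta> a"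
      using factorization unfolding e_def m_def by simp
  qed (use \<eta> calculation CartNt_Cmp_in_Arr in \<open>simp_all add: e_def m_def\<close>)
  ultimately show ?thesis
    using that[of e m] factorization unfolding lift_class_def e_def m_def by simp
qed

end

theorem lemma4p7:
  fixes A :: "('ao, 'am) cat" and D :: "('do, 'dm) cat"
    and E M :: "'dm set"
  assumes "category A" and "category D" and "has_pullbacks D"
    and "stable_ofs D E M"
  shows "ofs (CartNt A D) (lift_class A E \<inter> Arr (CartNt A D)) (lift_class A M \<inter> Arr (CartNt A D))"
proof -
  interpret functor_category_stable_ofs A D E M
    by unfold_locales (use assms in \<open>auto simp: stable_ofs_def\<close>)
  let ?C = "CartNt A D"
  let ?E = "lift_class A E \<inter> Arr ?C" and ?M = "lift_class A M \<inter> Arr ?C"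
  show ?thesis
  proof (rule ofsI)
    fix \<eta>
    assume "iso ?C \<eta>"
    then show "\<eta> \<in> ?E" "\<eta> \<in> ?M"
      using lift_class_iso D.iso_in_E D.iso_in_M by blast+
  next
    fix \<eta>
    assume "\<eta> \<in> Arr ?C"
    then obtain e m where "e \<in> ?E" "m \<in> ?M" "NTgt e = NSrc m" "Cmp ?C m e = \<eta>"
      by (rule CartNt_factorization)
    then show "\<exists>e\<in>?E. \<exists>m\<in>?M. Cod ?C e = Dom ?C m \<and> Cmp ?C m e = \<eta>"
      by auto
  qed (blast | (rule lift_class_Cmp_closed[OF D.E_Cmp_closed] lift_class_Cmp_closed[OF D.M_Cmp_closed]
      CartNt_unique_filler; simp_all))+
qed

end
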